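(* Consider a 1D convolutional layer mapping input sequences $w^{i-1}=(w^{i-1}_0,\dots,w^{i-1}_{N-1})$, $w^{i-1}_k\in\mathbb{R}^{c_{i-1}}$, to output sequences $w^i=(w^i_0,\dots,w^i_{N-1})$, $w^i_k\in\mathbb{R}^{c_i}$, via $$w^i_k=\phi_i\Big(b_i+\sum_{j=0}^{\ell_i-1}K^i_jw^{i-1}_{k-j}\Big),\qquad k=0,\dots,N-1,$$ with $w^{i-1}_m:=0$ for $m<0$, where $K^i_j\in\mathbb{R}^{c_i\times c_{i-1}}$, $b_i\in\mathbb{R}^{c_i}$, and $\phi_i(\nu)=(\varphi(\nu_1),\dots,\varphi(\nu_{c_i}))^\top$ with $\varphi:\mathbb{R}\to\mathbb{R}$ slope-restricted on $[0,1]$. Let $n_{x_i}=(\ell_i-1)c_{i-1}$ and let $$A_i=\begin{bmatrix}0&I\\0&0\end{bmatrix},\quad B_i=\begin{bmatrix}0\\ I\end{bmatrix},\quad C_i=\begin{bmatrix}K^i_{\ell_i-1}&\cdots&K^i_1\end{bmatrix},\quad D_i=K^i_0,$$ where $A_i\in\mathbb{R}^{n_{x_i}\times n_{x_i}}$ (the identity block of size $(\ell_i-2)c_{i-1}$) and $B_i\in\mathbb{R}^{n_{x_i}\times c_{i-1}}$ (identity block of size $c_{i-1}$), or let $(A_i,B_i,C_i,D_i)$ be replaced by $(EA_iE^{-1},EB_i,C_iE^{-1},D_i)$ for some invertible $E$. Let $\widetilde Q_i\in\mathbb{S}^{c_i}$, $\widetilde S_i\in\mathbb{R}^{c_i\times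 c_{i-1}}$, $\widetilde R_i\in\mathbb{S}^{c_{i-1}}$. If there exist a positive definite $P_i\in\mathbb{S}^{n_{x_i}}$ and a positive definite diagonal $\Lambda_i\in\mathbb{R}^{c_i\times c_i}$ such that $$\begin{bmatrix}P_i-A_i^\top P_iA_i & -A_i^\top P_iB_i & -C_i^\top\Lambda_i\\ -B_i^\top P_iA_i & \widetilde R_i-B_i^\top P_iB_i & \widetilde S_i^\top-D_i^\top\Lambda_i\\ -\Lambda_iC_i & \widetilde S_i-\Lambda_iD_i & 2\Lambda_i+\widetilde Q_i\end{bmatrix}\succeq 0,$$ then the layer is incrementally $(\widetilde Q_i,\widetilde S_i,\widetilde R_i)$-dissipative, i.e., for every $N\in\mathbb{N}_+$ and all input sequences $w^{i-1}_a,w^{i-1}_b$ of length $N$ with corresponding outputs $w^i_a,w^i_b$, writing $\Delta^i_{k}=w^i_{a,k}-w^i_{b,k}$ and $\Delta^{i-1}_{k}=w^{i-1}_{a,k}-w^{i-1}_{b,k}$, $$\sum_{k=0}^{N-1}\Big({\Delta^i_k}^\top\widetilde Q_i\Delta^i_k+2{\Delta^i_k}^\top\widetilde S_i\Delta^{i-1}_k+{\Delta^{i-1}_k}^\top\widetilde R_i\Delta^{i-1}_k\Big)\ge 0.$$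
   Context: $\mathbb{S}^n$ denotes the real symmetric $n\times n$ matrices. A function $\varphi:\mathbb{R}\to\mathbb{R}$ is slope-restricted on $[0,1]$ if $0\le\frac{\varphi(s)-\varphi(t)}{s-t}\le 1$ for all $s\ne t$. *)

theory Defs
  imports "Jordan_Normal_Form.Matrix"
begin

definition slope_restricted_01 :: "(real \<Rightarrow> real) \<Rightarrow> bool" where
  "slope_restricted_01 \<phi> \<longleftrightarrow>
     (\<forall>s t. s \<noteq> t \<longrightarrow> 0 \<le> (\<phi> s - \<phi> t) / (s - t) \<and> (\<phi> s - \<phi> t) / (s - t) \<le> 1)"

definition psd_mat :: "nat \<Rightarrow> real mat \<Rightarrow> bool" where
  "psd_mat n M \<longleftrightarrow> M \<in> carrier_mat n n \<and> transpose_mat M = M \<and>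
     (\<forall>x \<in> carrier_vec n. 0 \<le> x \<bullet> (M *\<^sub>v x))"

definition pd_mat :: "nat \<Rightarrow> real mat \<Rightarrow> bool" where
  "pd_mat n M \<longleftrightarrow> M \<in> carrier_mat n n \<and> transpose_mat M = M \<and>
     (\<forall>x \<in> carrier_vec n. x \<noteq> 0\<^sub>v n \<longrightarrow> 0 < x \<bullet> (M *\<^sub>v x))"

definition sym_mat :: "nat \<Rightarrow> real mat \<Rightarrow> bool" where
  "sym_mat n M \<longleftrightarrow> M \<in> carrier_mat n n \<and> transpose_mat M = M"

definition block3 :: "nat \<Rightarrow> nat \<Rightarrow> nat \<Rightarrow>
   real mat \<Rightarrow> real mat \<Rightarrow> real mat \<Rightarrow>
   real mat \<Rightarrow> real mat \<Rightarrow> real mat \<Rightarrow>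
   real mat \<Rightarrow> real mat \<Rightarrow> real mat \<Rightarrow> real mat" where
  "block3 n1 n2 n3 M11 M12 M13 M21 M22 M23 M31 M32 M33 =
     mat (n1+n2+n3) (n1+n2+n3) (\<lambda>(r,s).
       if r < n1 then
         (if s < n1 then M11 $$ (r,s) else if s < n1+n2 then M12 $$ (r, s-n1) else M13 $$ (r, s-n1-n2))
       else if r < n1+n2 then
         (if s < n1 then M21 $$ (r-n1,s) else if s < n1+n2 then M22 $$ (r-n1, s-n1) else M23 $$ (r-n1, s-n1-n2))
       else
         (if s < n1 then M31 $$ (r-n1-n2,s) else if s < n1+n2 then M32 $$ (r-n1-n2, s-n1) else M33 $$ (r-n1-n2, s-n1-n2)))"

text \<open>The 1D convolutional layer: input channels c0 (= c_{i-1}), output channels c1 (= c_i),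
  kernel length l, kernels K j (c1 x c0), bias b, activation phi applied componentwise;
  inputs with negative time index are zero.\<close>
definition conv_out :: "nat \<Rightarrow> nat \<Rightarrow> nat \<Rightarrow> (nat \<Rightarrow> real mat) \<Rightarrow> real vec \<Rightarrow> (real \<Rightarrow> real)
     \<Rightarrow> (nat \<Rightarrow> real vec) \<Rightarrow> nat \<Rightarrow> real vec" where
  "conv_out c0 c1 l K b \<phi> w k =
     map_vec \<phi> (b + vec c1 (\<lambda>r. \<Sum>j<l.
        (K j *\<^sub>v (if j \<le> k then w (k - j) else 0\<^sub>v c0)) $ r))"

definition conv_A :: "nat \<Rightarrow> nat \<Rightarrow> real mat" where
  "conv_A c0 l = mat ((l-1)*c0) ((l-1)*c0) (\<lambda>(r,s). if s = r + c0 then 1 else 0)"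

definition conv_B :: "nat \<Rightarrow> nat \<Rightarrow> real mat" where
  "conv_B c0 l = mat ((l-1)*c0) c0 (\<lambda>(r,s). if r = (l-2)*c0 + s then 1 else 0)"

text \<open>C = [K_{l-1} ... K_1]: column block q (q = 0..l-2) is K_{l-1-q}.\<close>
definition conv_C :: "nat \<Rightarrow> nat \<Rightarrow> nat \<Rightarrow> (nat \<Rightarrow> real mat) \<Rightarrow> real mat" where
  "conv_C c0 c1 l K = mat c1 ((l-1)*c0) (\<lambda>(r,s). K (l - 1 - s div c0) $$ (r, s mod c0))"

definition conv_D :: "(nat \<Rightarrow> real mat) \<Rightarrow> real mat" where
  "conv_D K = K 0"

end

theory Submission
  imports Defs
begin

(* The layer is a Lur'e system: with the state x_k stacking the last l - 1 inputs, oldest first,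
   x_(k+1) = A x_k + B w_k and the pre-activation is b + C x_k + D w_k. For two input sequences,
   evaluating the LMI at the differences (dx_k, dw_k, dy_k) and adding the sector inequality
   dy' Lambda (dnu - dy) >= 0, which holds entrywise because phi is slope-restricted on [0,1] and
   Lambda is diagonal and positive, gives V(dx_(k+1)) - V(dx_k) <= supply_k for V(x) = x' P x.
   Summing telescopes, and dx_0 = 0 together with V >= 0 yields the claim. The change of
   coordinates E only transports the state. *)

lemma smult_mat_mult_vec:
  assumes "A \<in> carrier_mat nr nc" "v \<in> carrier_vec nc"
  shows "((k::real) \<cdot>\<^sub>m A) *\<^sub>v v = k \<cdot>\<^sub>v (A *\<^sub>v v)"
  using assms by (intro eq_vecI) (auto simp: scalar_prod_def sum_distrib_left ac_simps)

lemma scalar_prod_transpose_mult_vec: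
  fixes M :: "real mat"
  assumes "M \<in> carrier_mat n m" "x \<in> carrier_vec m" "u \<in> carrier_vec n"
  shows "x \<bullet> (transpose_mat M *\<^sub>v u) = (M *\<^sub>v x) \<bullet> u"
  using assms transpose_vec_mult_scalar[OF assms] comm_scalar_prod[of x m "transpose_mat M *\<^sub>v u"]
    comm_scalar_prod[of u n "M *\<^sub>v x"] by simp

lemma scalar_prod_sym_mat_commute:
  fixes M :: "real mat"
  assumes "M \<in> carrier_mat n n" "transpose_mat M = M" "x \<in> carrier_vec n" "u \<in> carrier_vec n"
  shows "x \<bullet> (M *\<^sub>v u) = u \<bullet> (M *\<^sub>v x)"
  using scalar_prod_transpose_mult_vec[OF assms(1,3,4)] assms comm_scalar_prod[of "M *\<^sub>v x" n u]
  by simp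

lemma diagonal_mat_transpose:
  assumes "L \<in> carrier_mat n n" "diagonal_mat L"
  shows "transpose_mat L = L"
  using assms unfolding diagonal_mat_def by (intro eq_matI) (auto, metis)

lemma index_diagonal_mat_mult_vec:
  assumes "L \<in> carrier_mat n n" "diagonal_mat L" "v \<in> carrier_vec n" "r < n"
  shows "(L *\<^sub>v v) $ r = L $$ (r, r) * v $ r"
proof -
  have "(L *\<^sub>v v) $ r = (\<Sum>s\<in>{0..<n}. L $$ (r, s) * v $ s)"
    using assms by (simp add: scalar_prod_def)
  also have "\<dots> = (\<Sum>s\<in>{0..<n}. if s = r then L $$ (r, r) * v $ r else 0)"
    using assms unfolding diagonal_mat_def by (intro sum.cong) auto
  finally show ?thesis using assms by simp
qed

lemma block3_mult_vec:
  fixes x w y :: "real vec"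
  assumes c: "M11 \<in> carrier_mat n1 n1" "M12 \<in> carrier_mat n1 n2" "M13 \<in> carrier_mat n1 n3"
    "M21 \<in> carrier_mat n2 n1" "M22 \<in> carrier_mat n2 n2" "M23 \<in> carrier_mat n2 n3"
    "M31 \<in> carrier_mat n3 n1" "M32 \<in> carrier_mat n3 n2" "M33 \<in> carrier_mat n3 n3"
    and v: "x \<in> carrier_vec n1" "w \<in> carrier_vec n2" "y \<in> carrier_vec n3"
  shows "block3 n1 n2 n3 M11 M12 M13 M21 M22 M23 M31 M32 M33 *\<^sub>v ((x @\<^sub>v w) @\<^sub>v y) =
    ((M11 *\<^sub>v x + M12 *\<^sub>v w + M13 *\<^sub>v y) @\<^sub>v (M21 *\<^sub>v x + M22 *\<^sub>v w + M23 *\<^sub>v y))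
     @\<^sub>v (M31 *\<^sub>v x + M32 *\<^sub>v w + M33 *\<^sub>v y)"
    (is "?M *\<^sub>v ?z = ?rhs")
proof (rule eq_vecI)
  have row_expand: "row ?M r \<bullet> ?z = row Mr1 i \<bullet> x + row Mr2 i \<bullet> w + row Mr3 i \<bullet> y"
    if "row ?M r = (row Mr1 i @\<^sub>v row Mr2 i) @\<^sub>v row Mr3 i"
      "Mr1 \<in> carrier_mat k n1" "Mr2 \<in> carrier_mat k n2" "Mr3 \<in> carrier_mat k n3" "i < k" for r i k Mr1 Mr2 Mr3
    using that v by (simp add: scalar_prod_append[of _ "n1+n2" _ n3] scalar_prod_append[of _ n1 _ n2])
  fix i assume "i < dim_vec ?rhs"
  then have i: "i < n1 + n2 + n3" using c by simp
  consider "i < n1" | "n1 \<le> i" "i < n1 + n2" | "n1 + n2 \<le> i" by linarith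
  then show "(?M *\<^sub>v ?z) $ i = ?rhs $ i"
  proof cases
    case 1
    have "row ?M i = (row M11 i @\<^sub>v row M12 i) @\<^sub>v row M13 i"
      using 1 c by (intro eq_vecI) (auto simp: block3_def)
    from row_expand[OF this c(1-3) 1] show ?thesis using i 1 c v by (simp add: block3_def)
  next
    case 2
    have "row ?M i = (row M21 (i - n1) @\<^sub>v row M22 (i - n1)) @\<^sub>v row M23 (i - n1)"
      using 2 c by (intro eq_vecI) (auto simp: block3_def)
    from row_expand[OF this c(4-6)] show ?thesis using i 2 c v by (simp add: block3_def)
  next
    case 3
    have "row ?M i = (row M31 (i - n1 - n2) @\<^sub>v row M32 (i - n1 - n2)) @\<^sub>v row M33 (i - n1 - n2)"
      using 3 i c by (intro eq_vecI) (auto simp: block3_def)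
    from row_expand[OF this c(7-9)] show ?thesis using i 3 c v by (simp add: block3_def)
  qed
qed (use c in \<open>simp add: block3_def\<close>)

lemma block3_quadratic_form:
  fixes x w y :: "real vec"
  assumes c: "M11 \<in> carrier_mat n1 n1" "M12 \<in> carrier_mat n1 n2" "M13 \<in> carrier_mat n1 n3"
    "M21 \<in> carrier_mat n2 n1" "M22 \<in> carrier_mat n2 n2" "M23 \<in> carrier_mat n2 n3"
    "M31 \<in> carrier_mat n3 n1" "M32 \<in> carrier_mat n3 n2" "M33 \<in> carrier_mat n3 n3"
    and v: "x \<in> carrier_vec n1" "w \<in> carrier_vec n2" "y \<in> carrier_vec n3"
  shows "((x @\<^sub>v w) @\<^sub>v y) \<bullet> (block3 n1 n2 n3 M11 M12 M13 M21 M22 M23 M31 M32 M33 *\<^sub>v ((x @\<^sub>v w) @\<^sub>v y)) =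
    x \<bullet> (M11 *\<^sub>v x) + x \<bullet> (M12 *\<^sub>v w) + x \<bullet> (M13 *\<^sub>v y) +
    w \<bullet> (M21 *\<^sub>v x) + w \<bullet> (M22 *\<^sub>v w) + w \<bullet> (M23 *\<^sub>v y) +
    y \<bullet> (M31 *\<^sub>v x) + y \<bullet> (M32 *\<^sub>v w) + y \<bullet> (M33 *\<^sub>v y)"
  using c v
  by (simp add: block3_mult_vec[OF c v] scalar_prod_append[of _ "n1+n2" _ n3]
      scalar_prod_append[of _ n1 _ n2] scalar_prod_add_distrib[of _ n1]
      scalar_prod_add_distrib[of _ n2] scalar_prod_add_distrib[of _ n3])

definition dissipation_lmi :: "nat \<Rightarrow> nat \<Rightarrow> nat \<Rightarrow> real mat \<Rightarrow> real mat \<Rightarrow> real mat \<Rightarrow> real mat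
    \<Rightarrow> real mat \<Rightarrow> real mat \<Rightarrow> real mat \<Rightarrow> real mat \<Rightarrow> real mat \<Rightarrow> real mat" where
  "dissipation_lmi n m p A B C D P L Q S R =
     block3 n m p
       (P - transpose_mat A * P * A) (- (transpose_mat A * P * B)) (- (transpose_mat C * L))
       (- (transpose_mat B * P * A)) (R - transpose_mat B * P * B) (transpose_mat S - transpose_mat D * L)
       (- (L * C)) (S - L * D) (2 \<cdot>\<^sub>m L + Q)"

definition qsr_supply :: "real mat \<Rightarrow> real mat \<Rightarrow> real mat \<Rightarrow> real vec \<Rightarrow> real vec \<Rightarrow> real" where
  "qsr_supply Q S R y u = y \<bullet> (Q *\<^sub>v y) + 2 * (y \<bullet> (S *\<^sub>v u)) + u \<bullet> (R *\<^sub>v u)"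

lemma lyapunov_difference_quadratic_form:
  fixes A B P R :: "real mat" and x w :: "real vec"
  assumes A: "A \<in> carrier_mat n n" and B: "B \<in> carrier_mat n m"
    and P: "P \<in> carrier_mat n n" "transpose_mat P = P" and R: "R \<in> carrier_mat m m"
    and vecs: "x \<in> carrier_vec n" "w \<in> carrier_vec m"
  shows "x \<bullet> ((P - transpose_mat A * P * A) *\<^sub>v x) + x \<bullet> ((- (transpose_mat A * P * B)) *\<^sub>v w)
      + w \<bullet> ((- (transpose_mat B * P * A)) *\<^sub>v x) + w \<bullet> ((R - transpose_mat B * P * B) *\<^sub>v w)
    = x \<bullet> (P *\<^sub>v x) - (A *\<^sub>v x + B *\<^sub>v w) \<bullet> (P *\<^sub>v (A *\<^sub>v x + B *\<^sub>v w)) + w \<bullet> (R *\<^sub>v w)"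
proof -
  note assoc_mult_mat[simp del]
  have [simp]: "A *\<^sub>v x \<in> carrier_vec n" "B *\<^sub>v w \<in> carrier_vec n"
    "transpose_mat A * P * A \<in> carrier_mat n n" "transpose_mat B * P * B \<in> carrier_mat m m"
    using A B P vecs by auto
  have PMM: "(transpose_mat M * P * M') *\<^sub>v v = transpose_mat M *\<^sub>v (P *\<^sub>v (M' *\<^sub>v v))"
    if "M \<in> carrier_mat n k" "M' \<in> carrier_mat n k'" "v \<in> carrier_vec k'" for M M' v k k'
    using that P by (simp add: assoc_mult_mat_vec[of "transpose_mat M * P" k n M' k'])
  have "x \<bullet> ((P - transpose_mat A * P * A) *\<^sub>v x) = x \<bullet> (P *\<^sub>v x) - (A *\<^sub>v x) \<bullet> (P *\<^sub>v (A *\<^sub>v x))"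
    using A P vecs PMM[OF A A vecs(1)]
    by (simp add: minus_mult_distrib_mat_vec[of _ n n] scalar_prod_minus_distrib[of _ n]
        scalar_prod_transpose_mult_vec)
  moreover have "x \<bullet> ((- (transpose_mat A * P * B)) *\<^sub>v w) = - ((A *\<^sub>v x) \<bullet> (P *\<^sub>v (B *\<^sub>v w)))"
    using A B P vecs PMM[OF A B vecs(2)] by (simp add: scalar_prod_transpose_mult_vec)
  moreover have "w \<bullet> ((- (transpose_mat B * P * A)) *\<^sub>v x) = - ((B *\<^sub>v w) \<bullet> (P *\<^sub>v (A *\<^sub>v x)))"
    using A B P vecs PMM[OF B A vecs(1)] by (simp add: scalar_prod_transpose_mult_vec)
  moreover have "w \<bullet> ((R - transpose_mat B * P * B) *\<^sub>v w) = w \<bullet> (R *\<^sub>v w) - (B *\<^sub>v w) \<bullet> (P *\<^sub>v (B *\<^sub>v w))"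
    using B P R vecs PMM[OF B B vecs(2)]
    by (simp add: minus_mult_distrib_mat_vec[of _ m m] scalar_prod_minus_distrib[of _ m]
        scalar_prod_transpose_mult_vec)
  moreover have "(A *\<^sub>v x + B *\<^sub>v w) \<bullet> (P *\<^sub>v (A *\<^sub>v x + B *\<^sub>v w))
      = (A *\<^sub>v x) \<bullet> (P *\<^sub>v (A *\<^sub>v x)) + 2 * ((A *\<^sub>v x) \<bullet> (P *\<^sub>v (B *\<^sub>v w)))
        + (B *\<^sub>v w) \<bullet> (P *\<^sub>v (B *\<^sub>v w))"
    using P scalar_prod_sym_mat_commute[OF P, of "A *\<^sub>v x" "B *\<^sub>v w"]
    by (simp add: mult_add_distrib_mat_vec[of _ n n] scalar_prod_add_distrib[of _ n]
        add_scalar_prod_distrib[of _ n])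
  moreover have "(B *\<^sub>v w) \<bullet> (P *\<^sub>v (A *\<^sub>v x)) = (A *\<^sub>v x) \<bullet> (P *\<^sub>v (B *\<^sub>v w))"
    using scalar_prod_sym_mat_commute[OF P] by simp
  ultimately show ?thesis by argo
qed

lemma sector_multiplier_quadratic_form:
  fixes C D L Q S :: "real mat" and x w y :: "real vec"
  assumes C: "C \<in> carrier_mat p n" and D: "D \<in> carrier_mat p m"
    and L: "L \<in> carrier_mat p p" "transpose_mat L = L" and QS: "Q \<in> carrier_mat p p" "S \<in> carrier_mat p m"
    and vecs: "x \<in> carrier_vec n" "w \<in> carrier_vec m" "y \<in> carrier_vec p"
  shows "x \<bullet> ((- (transpose_mat C * L)) *\<^sub>v y) + w \<bullet> ((transpose_mat S - transpose_mat D * L) *\<^sub>v y)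
      + y \<bullet> ((- (L * C)) *\<^sub>v x) + y \<bullet> ((S - L * D) *\<^sub>v w) + y \<bullet> ((2 \<cdot>\<^sub>m L + Q) *\<^sub>v y)
    = y \<bullet> (Q *\<^sub>v y) + 2 * (y \<bullet> (S *\<^sub>v w)) - 2 * (y \<bullet> (L *\<^sub>v (C *\<^sub>v x + D *\<^sub>v w)) - y \<bullet> (L *\<^sub>v y))"
proof -
  note assoc_mult_mat[simp del]
  have [simp]: "C *\<^sub>v x \<in> carrier_vec p" "D *\<^sub>v w \<in> carrier_vec p" "L *\<^sub>v y \<in> carrier_vec p"
    "S *\<^sub>v w \<in> carrier_vec p" "transpose_mat D * L \<in> carrier_mat m p" "L * D \<in> carrier_mat p m"
    using C D L QS vecs by auto
  have "x \<bullet> ((- (transpose_mat C * L)) *\<^sub>v y) = - ((C *\<^sub>v x) \<bullet> (L *\<^sub>v y))"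
    using C L vecs scalar_prod_transpose_mult_vec[of C p n x "L *\<^sub>v y"] by simp
  moreover have "w \<bullet> ((transpose_mat S - transpose_mat D * L) *\<^sub>v y) = (S *\<^sub>v w) \<bullet> y - (D *\<^sub>v w) \<bullet> (L *\<^sub>v y)"
    using D L QS vecs
    by (simp add: minus_mult_distrib_mat_vec[of _ m p] scalar_prod_minus_distrib[of _ m]
        scalar_prod_transpose_mult_vec)
  moreover have "y \<bullet> ((- (L * C)) *\<^sub>v x) = - (y \<bullet> (L *\<^sub>v (C *\<^sub>v x)))"
    using C L vecs by (simp add: assoc_mult_mat_vec[of L p p C n])
  moreover have "y \<bullet> ((S - L * D) *\<^sub>v w) = y \<bullet> (S *\<^sub>v w) - y \<bullet> (L *\<^sub>v (D *\<^sub>v w))"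
    using D L QS vecs
    by (simp add: minus_mult_distrib_mat_vec[of _ p m] scalar_prod_minus_distrib[of _ p]
        assoc_mult_mat_vec[of L p p D m])
  moreover have "y \<bullet> ((2 \<cdot>\<^sub>m L + Q) *\<^sub>v y) = 2 * (y \<bullet> (L *\<^sub>v y)) + y \<bullet> (Q *\<^sub>v y)"
    using L QS vecs
    by (simp add: add_mult_distrib_mat_vec[of _ p p] scalar_prod_add_distrib[of _ p] smult_mat_mult_vec)
  moreover have "y \<bullet> (L *\<^sub>v (C *\<^sub>v x + D *\<^sub>v w)) = y \<bullet> (L *\<^sub>v (C *\<^sub>v x)) + y \<bullet> (L *\<^sub>v (D *\<^sub>v w))"
    using L vecs by (simp add: mult_add_distrib_mat_vec[of _ p p] scalar_prod_add_distrib[of _ p])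
  moreover have "(C *\<^sub>v x) \<bullet> (L *\<^sub>v y) = y \<bullet> (L *\<^sub>v (C *\<^sub>v x))"
    "(D *\<^sub>v w) \<bullet> (L *\<^sub>v y) = y \<bullet> (L *\<^sub>v (D *\<^sub>v w))" "(S *\<^sub>v w) \<bullet> y = y \<bullet> (S *\<^sub>v w)"
    using scalar_prod_sym_mat_commute[OF L] comm_scalar_prod[of "S *\<^sub>v w" p y] vecs by simp_all
  ultimately show ?thesis by argo
qed

lemma dissipation_lmi_quadratic_form:
  fixes A B C D P L Q S R :: "real mat" and x w y :: "real vec"
  assumes dims: "A \<in> carrier_mat n n" "B \<in> carrier_mat n m" "C \<in> carrier_mat p n" "D \<in> carrier_mat p m"
    and P: "P \<in> carrier_mat n n" "transpose_mat P = P"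
    and L: "L \<in> carrier_mat p p" "transpose_mat L = L"
    and QSR: "Q \<in> carrier_mat p p" "S \<in> carrier_mat p m" "R \<in> carrier_mat m m"
    and vecs: "x \<in> carrier_vec n" "w \<in> carrier_vec m" "y \<in> carrier_vec p"
  shows "((x @\<^sub>v w) @\<^sub>v y) \<bullet> (dissipation_lmi n m p A B C D P L Q S R *\<^sub>v ((x @\<^sub>v w) @\<^sub>v y))
    = x \<bullet> (P *\<^sub>v x) - (A *\<^sub>v x + B *\<^sub>v w) \<bullet> (P *\<^sub>v (A *\<^sub>v x + B *\<^sub>v w))
      - 2 * (y \<bullet> (L *\<^sub>v (C *\<^sub>v x + D *\<^sub>v w)) - y \<bullet> (L *\<^sub>v y)) + qsr_supply Q S R y w"
proof -
  have blocks: "P - transpose_mat A * P * A \<in> carrier_mat n n"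
    "- (transpose_mat A * P * B) \<in> carrier_mat n m" "- (transpose_mat C * L) \<in> carrier_mat n p"
    "- (transpose_mat B * P * A) \<in> carrier_mat m n" "R - transpose_mat B * P * B \<in> carrier_mat m m"
    "transpose_mat S - transpose_mat D * L \<in> carrier_mat m p" "- (L * C) \<in> carrier_mat p n"
    "S - L * D \<in> carrier_mat p m" "2 \<cdot>\<^sub>m L + Q \<in> carrier_mat p p"
    using dims P L QSR by auto
  show ?thesis
    using lyapunov_difference_quadratic_form[OF dims(1,2) P QSR(3) vecs(1,2)]
      sector_multiplier_quadratic_form[OF dims(3,4) L QSR(1,2) vecs]
    unfolding dissipation_lmi_def block3_quadratic_form[OF blocks vecs] qsr_supply_def by argo
qed

lemma slope_restricted_01_sector:
  assumes "slope_restricted_01 \<phi>"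
  shows "0 \<le> (\<phi> u - \<phi> v) * ((u - v) - (\<phi> u - \<phi> v))"
proof (cases "u = v")
  case False
  define t where "t = (\<phi> u - \<phi> v) / (u - v)"
  have t: "0 \<le> t" "t \<le> 1" using assms False unfolding slope_restricted_01_def t_def by auto
  have step: "\<phi> u - \<phi> v = t * (u - v)" using False unfolding t_def by simp
  have "(\<phi> u - \<phi> v) * ((u - v) - (\<phi> u - \<phi> v)) = t * (1 - t) * (u - v)\<^sup>2"
    unfolding step by (simp add: algebra_simps power2_eq_square)
  then show ?thesis using t by simp
qed simp

lemma slope_restricted_01_diagonal_sector:
  fixes b pa pb :: "real vec"
  assumes slope: "slope_restricted_01 \<phi>"
    and L: "L \<in> carrier_mat n n" "diagonal_mat L" and L_pos: "\<And>r. r < n \<Longrightarrow> 0 < L $$ (r, r)"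
    and vecs: "b \<in> carrier_vec n" "pa \<in> carrier_vec n" "pb \<in> carrier_vec n"
  defines "y \<equiv> map_vec \<phi> (b + pa) - map_vec \<phi> (b + pb)"
  shows "y \<bullet> (L *\<^sub>v y) \<le> y \<bullet> (L *\<^sub>v (pa - pb))"
proof -
  have y: "y \<in> carrier_vec n" unfolding y_def using vecs by auto
  have "y \<bullet> (L *\<^sub>v v) = (\<Sum>r\<in>{0..<n}. L $$ (r, r) * (y $ r * v $ r))" if "v \<in> carrier_vec n" for v
    unfolding scalar_prod_def using L that y
    by (intro sum.cong) (simp_all add: index_diagonal_mat_mult_vec del: index_mult_mat_vec)
  moreover have "L $$ (r, r) * (y $ r * y $ r) \<le> L $$ (r, r) * (y $ r * (pa - pb) $ r)" if "r < n" for r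
  proof -
    have "y $ r = \<phi> (b $ r + pa $ r) - \<phi> (b $ r + pb $ r)" "(pa - pb) $ r = (b $ r + pa $ r) - (b $ r + pb $ r)"
      unfolding y_def using that vecs by simp_all
    then have "0 \<le> y $ r * ((pa - pb) $ r - y $ r)"
      using slope_restricted_01_sector[OF slope] by presburger
    then have "y $ r * y $ r \<le> y $ r * (pa - pb) $ r" by (simp add: algebra_simps)
    then show ?thesis using L_pos[OF that] by (simp add: mult_left_mono)
  qed
  ultimately show ?thesis using y vecs by (auto intro!: sum_mono)
qed

lemma lmi_incremental_dissipativity:
  fixes A B C D P L Q S R :: "real mat" and x u pa pb :: "nat \<Rightarrow> real vec"
  assumes dims: "A \<in> carrier_mat n n" "B \<in> carrier_mat n m" "C \<in> carrier_mat p n" "D \<in> carrier_mat p m"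
    and P: "pd_mat n P"
    and L: "L \<in> carrier_mat p p" "diagonal_mat L" and L_pos: "\<And>r. r < p \<Longrightarrow> 0 < L $$ (r, r)"
    and QSR: "Q \<in> carrier_mat p p" "S \<in> carrier_mat p m" "R \<in> carrier_mat m m"
    and slope: "slope_restricted_01 \<phi>" and b: "b \<in> carrier_vec p"
    and LMI: "psd_mat (n + m + p) (dissipation_lmi n m p A B C D P L Q S R)"
    and x: "\<And>k. x k \<in> carrier_vec n" "x 0 = 0\<^sub>v n"
      "\<And>k. k < N \<Longrightarrow> x (Suc k) = A *\<^sub>v x k + B *\<^sub>v u k"
    and u: "\<And>k. k < N \<Longrightarrow> u k \<in> carrier_vec m"
    and pre: "\<And>k. k < N \<Longrightarrow> pa k \<in> carrier_vec p \<and> pb k \<in> carrier_vec p"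
      "\<And>k. k < N \<Longrightarrow> pa k - pb k = C *\<^sub>v x k + D *\<^sub>v u k"
  shows "0 \<le> (\<Sum>k<N. qsr_supply Q S R (map_vec \<phi> (b + pa k) - map_vec \<phi> (b + pb k)) (u k))"
proof -
  have P_sym: "P \<in> carrier_mat n n" "transpose_mat P = P" using P unfolding pd_mat_def by auto
  define V where "V k = x k \<bullet> (P *\<^sub>v x k)" for k
  define y where "y k = map_vec \<phi> (b + pa k) - map_vec \<phi> (b + pb k)" for k
  have "V (Suc k) - V k \<le> qsr_supply Q S R (y k) (u k)" if k: "k < N" for k
  proof -
    have yk: "y k \<in> carrier_vec p" unfolding y_def using b pre(1)[OF k] by auto
    have "0 \<le> ((x k @\<^sub>v u k) @\<^sub>v y k) \<bullet>
        (dissipation_lmi n m p A B C D P L Q S R *\<^sub>v ((x k @\<^sub>v u k) @\<^sub>v y k))"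
      using LMI x(1) u[OF k] yk unfolding psd_mat_def by blast
    also have "\<dots> = V k - V (Suc k) - 2 * (y k \<bullet> (L *\<^sub>v (pa k - pb k)) - y k \<bullet> (L *\<^sub>v y k))
        + qsr_supply Q S R (y k) (u k)"
      unfolding V_def x(3)[OF k] pre(2)[OF k]
      by (rule dissipation_lmi_quadratic_form[OF dims P_sym L(1) diagonal_mat_transpose[OF L] QSR
            x(1) u[OF k] yk])
    finally have "0 \<le> V k - V (Suc k) - 2 * (y k \<bullet> (L *\<^sub>v (pa k - pb k)) - y k \<bullet> (L *\<^sub>v y k))
        + qsr_supply Q S R (y k) (u k)" .
    moreover have "y k \<bullet> (L *\<^sub>v y k) \<le> y k \<bullet> (L *\<^sub>v (pa k - pb k))"
      unfolding y_def by (rule slope_restricted_01_diagonal_sector[OF slope L]) (use L_pos b pre(1)[OF k] in auto)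
    ultimately show ?thesis by argo
  qed
  then have "V N - V 0 \<le> (\<Sum>k<N. qsr_supply Q S R (y k) (u k))"
    by (metis (no_types, lifting) lessThan_iff sum_lessThan_telescope sum_mono)
  moreover have "V 0 = 0" unfolding V_def x(2) using P_sym by simp
  moreover have "0 \<le> V N"
  proof (cases "x N = 0\<^sub>v n")
    case False
    then show ?thesis using P x(1)[of N] unfolding V_def pd_mat_def by (simp add: less_imp_le)
  qed (use P_sym in \<open>simp add: V_def\<close>)
  ultimately show ?thesis unfolding y_def by argo
qed

lemma similarity_transform_mult_vec:
  fixes E Einv A B C :: "real mat"
  assumes E: "E \<in> carrier_mat n n" "Einv \<in> carrier_mat n n" "Einv * E = 1\<^sub>m n"
    and dims: "A \<in> carrier_mat n n" "B \<in> carrier_mat n m" "C \<in> carrier_mat p n"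
    and vecs: "x \<in> carrier_vec n" "u \<in> carrier_vec m"
  shows "(E * A * Einv) *\<^sub>v (E *\<^sub>v x) + (E * B) *\<^sub>v u = E *\<^sub>v (A *\<^sub>v x + B *\<^sub>v u)"
    and "(C * Einv) *\<^sub>v (E *\<^sub>v x) = C *\<^sub>v x"
proof -
  have E_cancel: "Einv *\<^sub>v (E *\<^sub>v x) = x"
    using assoc_mult_mat_vec[OF E(2,1) vecs(1)] E(3) vecs(1) by simp
  have "(E * A * Einv) *\<^sub>v (E *\<^sub>v x) = E *\<^sub>v (A *\<^sub>v x)"
    using assoc_mult_mat_vec[OF mult_carrier_mat[OF E(1) dims(1)] E(2) mult_mat_vec_carrier[OF E(1) vecs(1)]]
      assoc_mult_mat_vec[OF E(1) dims(1) vecs(1)] E_cancel by simp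
  then show "(E * A * Einv) *\<^sub>v (E *\<^sub>v x) + (E * B) *\<^sub>v u = E *\<^sub>v (A *\<^sub>v x + B *\<^sub>v u)"
    using E dims vecs by (simp add: mult_add_distrib_mat_vec[of E n n])
  show "(C * Einv) *\<^sub>v (E *\<^sub>v x) = C *\<^sub>v x"
    using assoc_mult_mat_vec[OF dims(3) E(2) mult_mat_vec_carrier[OF E(1) vecs(1)]] E_cancel by simp
qed

lemma index_mult_vec_block_row:
  fixes F :: "nat \<Rightarrow> real mat" and G :: "nat \<Rightarrow> real vec"
  assumes r: "r < p" and F: "\<And>q. q < m \<Longrightarrow> F q \<in> carrier_mat p c"
    and G: "\<And>q. q < m \<Longrightarrow> G q \<in> carrier_vec c"
  shows "(mat p (m * c) (\<lambda>(r, s). F (s div c) $$ (r, s mod c))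
      *\<^sub>v vec (m * c) (\<lambda>s. G (s div c) $ (s mod c))) $ r = (\<Sum>q<m. (F q *\<^sub>v G q) $ r)"
proof -
  define f where "f s = F (s div c) $$ (r, s mod c) * G (s div c) $ (s mod c)" for s
  have "(mat p (m * c) (\<lambda>(r, s). F (s div c) $$ (r, s mod c))
      *\<^sub>v vec (m * c) (\<lambda>s. G (s div c) $ (s mod c))) $ r = (\<Sum>s<m * c. f s)"
    using r by (simp add: scalar_prod_def atLeast0LessThan f_def)
  also have "\<dots> = (\<Sum>q<m. \<Sum>s\<in>{q * c..<q * c + c}. f s)"
    by (rule sum.nat_group[symmetric])
  also have "\<dots> = (\<Sum>q<m. (F q *\<^sub>v G q) $ r)"
  proof (rule sum.cong[OF refl])
    fix q assume "q \<in> {..<m}"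
    then have "(F q *\<^sub>v G q) $ r = (\<Sum>i<c. f (i + q * c))"
      using r F[of q] G[of q] by (simp add: scalar_prod_def atLeast0LessThan f_def)
    then show "(\<Sum>s\<in>{q * c..<q * c + c}. f s) = (F q *\<^sub>v G q) $ r"
      using sum.shift_bounds_nat_ivl[of f 0 "q * c" c] by (simp add: atLeast0LessThan add.commute)
  qed
  finally show ?thesis .
qed

definition delayed_input :: "nat \<Rightarrow> (nat \<Rightarrow> real vec) \<Rightarrow> nat \<Rightarrow> nat \<Rightarrow> real vec" where
  "delayed_input c0 w k j = (if j \<le> k then w (k - j) else 0\<^sub>v c0)"

lemma delayed_input_0 [simp]: "delayed_input c0 w k 0 = w k"
  by (simp add: delayed_input_def)

lemma delayed_input_Suc_Suc [simp]: "delayed_input c0 w (Suc k) (Suc j) = delayed_input c0 w k j"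
  by (simp add: delayed_input_def)

definition conv_preact :: "nat \<Rightarrow> nat \<Rightarrow> nat \<Rightarrow> (nat \<Rightarrow> real mat) \<Rightarrow> (nat \<Rightarrow> real vec) \<Rightarrow> nat \<Rightarrow> real vec" where
  "conv_preact c0 c1 l K w k = vec c1 (\<lambda>r. \<Sum>j<l. (K j *\<^sub>v delayed_input c0 w k j) $ r)"

lemma conv_out_conv_preact: "conv_out c0 c1 l K b \<phi> w k = map_vec \<phi> (b + conv_preact c0 c1 l K w k)"
  by (simp add: conv_out_def conv_preact_def delayed_input_def)

lemma conv_preact_diff:
  assumes K: "\<And>j. j < l \<Longrightarrow> K j \<in> carrier_mat c1 c0"
    and w: "\<And>m. m \<le> k \<Longrightarrow> wa m \<in> carrier_vec c0 \<and> wb m \<in> carrier_vec c0"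
  shows "conv_preact c0 c1 l K wa k - conv_preact c0 c1 l K wb k
    = conv_preact c0 c1 l K (\<lambda>m. wa m - wb m) k"
proof (rule eq_vecI)
  fix r assume "r < dim_vec (conv_preact c0 c1 l K (\<lambda>m. wa m - wb m) k)"
  then have r: "r < c1" by (simp add: conv_preact_def)
  have "(K j *\<^sub>v delayed_input c0 wa k j) $ r - (K j *\<^sub>v delayed_input c0 wb k j) $ r
      = (K j *\<^sub>v delayed_input c0 (\<lambda>m. wa m - wb m) k j) $ r" if "j < l" for j
    using K[OF that] w r
    by (auto simp: delayed_input_def scalar_prod_minus_distrib[of _ c0])
  then show "(conv_preact c0 c1 l K wa k - conv_preact c0 c1 l K wb k) $ r
      = conv_preact c0 c1 l K (\<lambda>m. wa m - wb m) k $ r"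
    using r by (simp add: conv_preact_def sum_subtractf[symmetric])
qed (simp add: conv_preact_def)

(* Block q of the state holds the input delayed by l - 1 - q steps, matching the block K_(l-1-q)
   of conv_C; zeros stand for inputs before time 0. *)
definition conv_state :: "nat \<Rightarrow> nat \<Rightarrow> (nat \<Rightarrow> real vec) \<Rightarrow> nat \<Rightarrow> real vec" where
  "conv_state c0 l w k = vec ((l - 1) * c0) (\<lambda>s. delayed_input c0 w k (l - 1 - s div c0) $ (s mod c0))"

lemma conv_A_carrier: "conv_A c0 l \<in> carrier_mat ((l - 1) * c0) ((l - 1) * c0)"
  by (simp add: conv_A_def)

lemma conv_B_carrier: "conv_B c0 l \<in> carrier_mat ((l - 1) * c0) c0"
  by (simp add: conv_B_def)

lemma conv_C_carrier: "conv_C c0 c1 l K \<in> carrier_mat c1 ((l - 1) * c0)"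
  by (simp add: conv_C_def)

lemma conv_state_carrier: "conv_state c0 l w k \<in> carrier_vec ((l - 1) * c0)"
  by (simp add: conv_state_def)

lemma conv_state_0: "conv_state c0 l w 0 = 0\<^sub>v ((l - 1) * c0)"
proof (rule eq_vecI)
  fix s assume "s < dim_vec (0\<^sub>v ((l - 1) * c0))"
  then have "s < (l - 1) * c0" "s div c0 < l - 1" "0 < c0"
    by (auto simp: less_mult_imp_div_less intro: gr0I)
  then show "conv_state c0 l w 0 $ s = 0\<^sub>v ((l - 1) * c0) $ s"
    by (simp add: conv_state_def delayed_input_def)
qed (simp add: conv_state_def)

lemma index_conv_A_mult_vec:
  assumes "x \<in> carrier_vec ((l - 1) * c0)" "r < (l - 1) * c0"
  shows "(conv_A c0 l *\<^sub>v x) $ r = (if r + c0 < (l - 1) * c0 then x $ (r + c0) else 0)"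
proof -
  have "(conv_A c0 l *\<^sub>v x) $ r = (\<Sum>s\<in>{0..<(l - 1) * c0}. (if s = r + c0 then 1 else 0) * x $ s)"
    using assms by (simp add: conv_A_def scalar_prod_def)
  also have "\<dots> = (\<Sum>s\<in>{0..<(l - 1) * c0}. if s = r + c0 then x $ s else 0)"
    by (rule sum.cong) auto
  finally show ?thesis by simp
qed

lemma index_conv_B_mult_vec:
  assumes "v \<in> carrier_vec c0" "r < (l - 1) * c0"
  shows "(conv_B c0 l *\<^sub>v v) $ r = (if (l - 2) * c0 \<le> r then v $ (r - (l - 2) * c0) else 0)"
proof -
  have "r < (l - 2) * c0 + c0"
  proof (cases "l - 1")
    case (Suc j)
    then have "l - 2 = j" by simp
    then show ?thesis using Suc assms(2) by simp
  qed (use assms(2) in simp)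
  then have in_block: "(l - 2) * c0 \<le> r \<Longrightarrow> r - (l - 2) * c0 < c0" by linarith
  have "(conv_B c0 l *\<^sub>v v) $ r = (\<Sum>s\<in>{0..<c0}. (if r = (l - 2) * c0 + s then 1 else 0) * v $ s)"
    using assms by (simp add: conv_B_def scalar_prod_def)
  also have "\<dots> = (\<Sum>s\<in>{0..<c0}. if s = r - (l - 2) * c0 \<and> (l - 2) * c0 \<le> r then v $ s else 0)"
    by (rule sum.cong) auto
  finally show ?thesis using in_block by (simp add: sum.delta)
qed

lemma conv_state_Suc:
  assumes "w k \<in> carrier_vec c0"
  shows "conv_A c0 l *\<^sub>v conv_state c0 l w k + conv_B c0 l *\<^sub>v w k = conv_state c0 l w (Suc k)"
proof (rule eq_vecI)
  fix r assume "r < dim_vec (conv_state c0 l w (Suc k))"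
  then have r: "r < (l - 1) * c0" by (simp add: conv_state_def)
  then have c0: "0 < c0" by (cases c0) auto
  define q where "q = r div c0"
  have q: "q < l - 1" using r c0 unfolding q_def by (simp add: div_less_iff_less_mult)
  have A_cond: "r + c0 < (l - 1) * c0 \<longleftrightarrow> Suc q < l - 1"
    using div_less_iff_less_mult[OF c0, of "r + c0" "l - 1"] c0 unfolding q_def by simp
  have B_cond: "(l - 2) * c0 \<le> r \<longleftrightarrow> l - 2 \<le> q"
    using less_eq_div_iff_mult_less_eq[OF c0, of "l - 2" r] unfolding q_def by simp
  have dims: "dim_vec (conv_A c0 l *\<^sub>v conv_state c0 l w k) = (l - 1) * c0"
    "dim_vec (conv_B c0 l *\<^sub>v w k) = (l - 1) * c0"
    by (simp_all add: conv_A_def conv_B_def)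
  have split: "(conv_A c0 l *\<^sub>v conv_state c0 l w k + conv_B c0 l *\<^sub>v w k) $ r
      = (if Suc q < l - 1 then conv_state c0 l w k $ (r + c0) else 0)
        + (if l - 2 \<le> q then w k $ (r - (l - 2) * c0) else 0)"
    using dims r
    by (simp only: index_add_vec(1) index_conv_A_mult_vec[OF conv_state_carrier r]
        index_conv_B_mult_vec[OF assms r] A_cond B_cond)
  have next_state: "conv_state c0 l w (Suc k) $ r = delayed_input c0 w (Suc k) (l - 1 - q) $ (r mod c0)"
    using r unfolding q_def conv_state_def by simp
  show "(conv_A c0 l *\<^sub>v conv_state c0 l w k + conv_B c0 l *\<^sub>v w k) $ r = conv_state c0 l w (Suc k) $ r"
  proof (cases "Suc q < l - 1")
    case True
    have "(r + c0) div c0 = Suc q" "(r + c0) mod c0 = r mod c0" using c0 unfolding q_def by simp_all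
    then have "conv_state c0 l w k $ (r + c0) = delayed_input c0 w k (l - 1 - Suc q) $ (r mod c0)"
      using True A_cond unfolding conv_state_def by simp
    moreover have "l - 1 - q = Suc (l - 1 - Suc q)" "\<not> l - 2 \<le> q" using True by linarith+
    ultimately show ?thesis
      using True next_state split by simp
  next
    case False
    then have "q = l - 2" "l - 1 - q = 1" using q by linarith+
    moreover have "r - (l - 2) * c0 = r mod c0"
      using \<open>q = l - 2\<close> minus_div_mult_eq_mod[of r c0] unfolding q_def by simp
    ultimately show ?thesis
      using next_state split by (simp add: delayed_input_def)
  qed
qed (simp add: conv_state_def conv_A_def conv_B_def)

lemma conv_C_mult_conv_state:
  assumes l: "1 \<le> l" and K: "\<And>j. j < l \<Longrightarrow> K j \<in> carrier_mat c1 c0"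
    and w: "\<And>m. m \<le> k \<Longrightarrow> w m \<in> carrier_vec c0"
  shows "conv_C c0 c1 l K *\<^sub>v conv_state c0 l w k + conv_D K *\<^sub>v w k = conv_preact c0 c1 l K w k"
proof (rule eq_vecI)
  fix r assume "r < dim_vec (conv_preact c0 c1 l K w k)"
  then have r: "r < c1" by (simp add: conv_preact_def)
  define h where "h j = (K j *\<^sub>v delayed_input c0 w k j) $ r" for j
  have "(conv_C c0 c1 l K *\<^sub>v conv_state c0 l w k) $ r = (\<Sum>q<l - 1. h (l - 1 - q))"
    unfolding conv_C_def conv_state_def h_def
    by (rule index_mult_vec_block_row[where F = "\<lambda>q. K (l - 1 - q)"
          and G = "\<lambda>q. delayed_input c0 w k (l - 1 - q)"])
      (use r K w in \<open>auto simp: delayed_input_def\<close>)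
  moreover have "(conv_D K *\<^sub>v w k) $ r = h 0"
    using r K[of 0] l by (simp add: conv_D_def h_def)
  moreover have "(\<Sum>j<l. h j) = (\<Sum>q<l - 1. h (l - 1 - q)) + h 0"
  proof -
    obtain n where n: "l = Suc n" using l by (cases l) auto
    show ?thesis using sum.nat_diff_reindex[of h l] unfolding n by simp
  qed
  ultimately show "(conv_C c0 c1 l K *\<^sub>v conv_state c0 l w k + conv_D K *\<^sub>v w k) $ r
      = conv_preact c0 c1 l K w k $ r"
    using r K[of 0] l by (simp add: conv_C_def conv_D_def conv_preact_def h_def)
qed (use K[of 0] l in \<open>simp_all add: conv_C_def conv_D_def conv_preact_def\<close>)

lemma conv_layer_state_space:
  fixes E Einv :: "real mat" and wa wb :: "nat \<Rightarrow> real vec"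
  assumes l: "1 \<le> l" and K: "\<And>j. j < l \<Longrightarrow> K j \<in> carrier_mat c1 c0"
    and E: "E \<in> carrier_mat ((l - 1) * c0) ((l - 1) * c0)" "Einv \<in> carrier_mat ((l - 1) * c0) ((l - 1) * c0)"
      "Einv * E = 1\<^sub>m ((l - 1) * c0)"
    and w: "\<forall>k<N. wa k \<in> carrier_vec c0 \<and> wb k \<in> carrier_vec c0"
  defines "d \<equiv> \<lambda>k. wa k - wb k"
    and "x \<equiv> \<lambda>k. E *\<^sub>v conv_state c0 l (\<lambda>m. wa m - wb m) k"
  shows "\<And>k. x k \<in> carrier_vec ((l - 1) * c0)"
    and "x 0 = 0\<^sub>v ((l - 1) * c0)"
    and "\<And>k. k < N \<Longrightarrow> x (Suc k) = (E * conv_A c0 l * Einv) *\<^sub>v x k + (E * conv_B c0 l) *\<^sub>v d k"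
    and "\<And>k. k < N \<Longrightarrow> d k \<in> carrier_vec c0"
    and "\<And>k. k < N \<Longrightarrow> conv_preact c0 c1 l K wa k \<in> carrier_vec c1 \<and> conv_preact c0 c1 l K wb k \<in> carrier_vec c1"
    and "\<And>k. k < N \<Longrightarrow> conv_preact c0 c1 l K wa k - conv_preact c0 c1 l K wb k
      = (conv_C c0 c1 l K * Einv) *\<^sub>v x k + conv_D K *\<^sub>v d k"
proof -
  have x: "x = (\<lambda>k. E *\<^sub>v conv_state c0 l d k)" unfolding x_def d_def ..
  note carriers = conv_A_carrier[of c0 l] conv_B_carrier[of c0 l] conv_C_carrier[of c0 c1 l K]
    conv_state_carrier[of c0 l d]
  show "x k \<in> carrier_vec ((l - 1) * c0)" for k
    using E carriers(4) unfolding x by simp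
  show "x 0 = 0\<^sub>v ((l - 1) * c0)"
    unfolding x conv_state_0 by (rule eq_vecI) (use E in auto)
  show d: "d k \<in> carrier_vec c0" if "k < N" for k
    using w that unfolding d_def by auto
  show "x (Suc k) = (E * conv_A c0 l * Einv) *\<^sub>v x k + (E * conv_B c0 l) *\<^sub>v d k" if "k < N" for k
    using similarity_transform_mult_vec(1)[OF E carriers(1-4) d[OF that]]
      conv_state_Suc[where w = d and k = k and l = l, OF d[OF that]]
    unfolding x by simp
  show "conv_preact c0 c1 l K wa k \<in> carrier_vec c1 \<and> conv_preact c0 c1 l K wb k \<in> carrier_vec c1" for k
    by (simp add: conv_preact_def)
  show "conv_preact c0 c1 l K wa k - conv_preact c0 c1 l K wb k
      = (conv_C c0 c1 l K * Einv) *\<^sub>v x k + conv_D K *\<^sub>v d k" if "k < N" for k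
    using conv_preact_diff[OF K, where k = k and wa = wa and wb = wb]
      conv_C_mult_conv_state[OF l K, where k = k and w = d]
      similarity_transform_mult_vec(2)[OF E carriers(1-4) d[OF that]] w that d
    unfolding x d_def by auto
qed

theorem lemma4:
  fixes c0 c1 l :: nat
    and K :: "nat \<Rightarrow> real mat" and b :: "real vec" and \<phi> :: "real \<Rightarrow> real"
    and E Einv P \<Lambda> Qt St Rt :: "real mat"
  defines "nx \<equiv> (l - 1) * c0"
  defines "A \<equiv> E * conv_A c0 l * Einv"
      and "B \<equiv> E * conv_B c0 l"
      and "C \<equiv> conv_C c0 c1 l K * Einv"
      and "D \<equiv> conv_D K"
  assumes l_pos: "1 \<le> l"
    and K_dim: "\<And>j. j < l \<Longrightarrow> K j \<in> carrier_mat c1 c0"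
    and b_dim: "b \<in> carrier_vec c1"
    and slope: "slope_restricted_01 \<phi>"
    and E_dim: "E \<in> carrier_mat nx nx" and Einv_dim: "Einv \<in> carrier_mat nx nx"
    and E_inv: "E * Einv = 1\<^sub>m nx" "Einv * E = 1\<^sub>m nx"
    and Qt: "sym_mat c1 Qt" and St: "St \<in> carrier_mat c1 c0" and Rt: "sym_mat c0 Rt"
    and P_pd: "pd_mat nx P"
    and Lam_dim: "\<Lambda> \<in> carrier_mat c1 c1" and Lam_diag: "diagonal_mat \<Lambda>"
    and Lam_pos: "\<And>r. r < c1 \<Longrightarrow> 0 < \<Lambda> $$ (r, r)"
    and LMI: "psd_mat (nx + c0 + c1)
      (block3 nx c0 c1
        (P - transpose_mat A * P * A) (- (transpose_mat A * P * B)) (- (transpose_mat C * \<Lambda>))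
        (- (transpose_mat B * P * A)) (Rt - transpose_mat B * P * B) (transpose_mat St - transpose_mat D * \<Lambda>)
        (- (\<Lambda> * C)) (St - \<Lambda> * D) (2 \<cdot>\<^sub>m \<Lambda> + Qt))"
  shows "\<forall>N wa wb. 0 < N \<longrightarrow>
           (\<forall>k<N. wa k \<in> carrier_vec c0 \<and> wb k \<in> carrier_vec c0) \<longrightarrow>
           0 \<le> (\<Sum>k<N.
              let dout = conv_out c0 c1 l K b \<phi> wa k - conv_out c0 c1 l K b \<phi> wb k;
                  din = wa k - wb k
              in dout \<bullet> (Qt *\<^sub>v dout) + 2 * (dout \<bullet> (St *\<^sub>v din)) + din \<bullet> (Rt *\<^sub>v din))"
proof (intro allI impI)
  fix N :: nat and wa wb :: "nat \<Rightarrow> real vec"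
  assume "0 < N" and w: "\<forall>k<N. wa k \<in> carrier_vec c0 \<and> wb k \<in> carrier_vec c0"
  have dims: "A \<in> carrier_mat nx nx" "B \<in> carrier_mat nx c0" "C \<in> carrier_mat c1 nx" "D \<in> carrier_mat c1 c0"
    using conv_A_carrier[of c0 l] conv_B_carrier[of c0 l] conv_C_carrier[of c0 c1 l K] E_dim Einv_dim
      K_dim[of 0] l_pos
    unfolding A_def B_def C_def D_def conv_D_def nx_def by auto
  have QR: "Qt \<in> carrier_mat c1 c1" "Rt \<in> carrier_mat c0 c0"
    using Qt Rt unfolding sym_mat_def by auto
  have "psd_mat (nx + c0 + c1) (dissipation_lmi nx c0 c1 A B C D P \<Lambda> Qt St Rt)"
    using LMI unfolding dissipation_lmi_def .
  from lmi_incremental_dissipativity[OF dims P_pd Lam_dim Lam_diag Lam_pos QR(1) St QR(2) slope b_dim this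
      conv_layer_state_space[where K = K, OF l_pos K_dim E_dim[unfolded nx_def] Einv_dim[unfolded nx_def]
        E_inv(2)[unfolded nx_def] w, folded nx_def A_def B_def C_def D_def]]
  show "0 \<le> (\<Sum>k<N.
              let dout = conv_out c0 c1 l K b \<phi> wa k - conv_out c0 c1 l K b \<phi> wb k;
                  din = wa k - wb k
              in dout \<bullet> (Qt *\<^sub>v dout) + 2 * (dout \<bullet> (St *\<^sub>v din)) + din \<bullet> (Rt *\<^sub>v din))"
    unfolding Let_def conv_out_conv_preact qsr_supply_def .
qed

end
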